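(* Let $\omega_p\in[0,\pi]$ and $\theta_p\in\mathbb{R}$. (I) If $\omega_p\in(0,\pi)$, then $$\sup_{f\in\mathbb{RF}_{\omega_p,\theta_p}}\theta_f'(\omega_p)=-\left|\frac{\sin\theta_p}{\sin\omega_p}\right|.$$ (II) If $\omega_p\in\{0,\pi\}$ and $\theta_p\in\{0,\pi\}$ (mod $2\pi$), then $\sup_{f\in\mathbb{RF}_{\omega_p,\theta_p}}\theta_f'(\omega_p)=0$. Moreover, when the supremum is zero (i.e. $\theta_p\in\{0,\pi\}$ mod $2\pi$) it is attained by $f(z)=1$ or $f(z)=-1$; when it is nonzero it is attained by a first-order all-pass function $f(z)=\pm\frac{az+1}{z+a}$ with a suitable sign and $|a|<1$ chosen so that $\theta_f(\omega_p)=\theta_p$ (mod $2\pi$).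
   Context: $\mathbb{T}$ is the unit circle, $\mathbb{D}$ the open unit disk. $\mathcal{RH}_\infty$: proper real-rational functions with all poles in $\mathbb{D}$, with $\|f\|_{H_\infty}=\sup_{\omega\in(-\pi,\pi]}|f(e^{j\omega})|$. For $f$ with $f(e^{j\omega})\neq0$ near $\omega$, $\theta_f(\omega):=\angle f(e^{j\omega})$ is a continuous choice of argument and $\theta_f'(\omega)$ its derivative in $\omega$. For $\omega_p\in[0,\pi]$ and $\theta_p\in\mathbb{R}$: $\mathbb{RF}_{\omega_p,\theta_p}:=\{f\in\mathcal{RH}_\infty:\ \|f\|_{H_\infty}=|f(e^{j\omega_p})|=1,\ \theta_f(\omega_p)=\theta_p \ (\mathrm{mod}\ 2\pi)\}$. *)

theory Defs
  imports "HOL-Analysis.Analysis" "HOL-Computational_Algebra.Polynomial"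
begin

definition RH_inf :: "(complex \<Rightarrow> complex) set" where
  "RH_inf = {f. \<exists>p q :: real poly. q \<noteq> 0 \<and> degree p \<le> degree q \<and>
       (\<forall>z. poly (map_poly complex_of_real q) z = 0 \<longrightarrow> cmod z < 1) \<and>
       f = (\<lambda>z. poly (map_poly complex_of_real p) z / poly (map_poly complex_of_real q) z)}"

definition hinf_norm :: "(complex \<Rightarrow> complex) \<Rightarrow> real" where
  "hinf_norm f = (SUP \<omega>\<in>{-pi<..pi}. cmod (f (cis \<omega>)))"

definition has_phase_deriv :: "(complex \<Rightarrow> complex) \<Rightarrow> real \<Rightarrow> real \<Rightarrow> bool" where
  "has_phase_deriv f \<omega> D \<longleftrightarrow> (\<exists>e>0. \<exists>\<theta>::real\<Rightarrow>real.
      (\<forall>t\<in>ball \<omega> e. f (cis t) = complex_of_real (cmod (f (cis t))) * cis (\<theta> t)) \<and>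
      continuous_on (ball \<omega> e) \<theta> \<and> (\<theta> has_real_derivative D) (at \<omega>))"

definition phase_deriv :: "(complex \<Rightarrow> complex) \<Rightarrow> real \<Rightarrow> real" where
  "phase_deriv f \<omega> = (THE D. has_phase_deriv f \<omega> D)"

text \<open>RF_{wp,thp}: ||f|| = |f(e^{j wp})| = 1 and the argument of f(e^{j wp}) equals thp mod 2pi
  (since |f(e^{j wp})| = 1 this says f(e^{j wp}) = e^{j thp}).\<close>
definition RF :: "real \<Rightarrow> real \<Rightarrow> (complex \<Rightarrow> complex) set" where
  "RF \<omega>p \<theta>p = {f \<in> RH_inf. hinf_norm f = 1 \<and> cmod (f (cis \<omega>p)) = 1 \<and> f (cis \<omega>p) = cis \<theta>p}"

end

theory Submission
  imports Defs "HOL-Complex_Analysis.Complex_Analysis"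
begin

text \<open>For \<open>f \<in> RF \<omega> \<theta>\<close>, \<open>H w = f (1/w)\<close> is a holomorphic self-map of the unit disc, and the
  phase derivative of \<open>f\<close> at \<open>z\<^sub>0 = cis \<omega>\<close> is \<open>Re (z\<^sub>0 f'(z\<^sub>0) / f z\<^sub>0)\<close>. Because \<open>f\<close> has real
  coefficients, \<open>H\<close> sends \<open>r cnj z\<^sub>0\<close> and \<open>r z\<^sub>0\<close> to \<open>f (z\<^sub>0/r)\<close> and its conjugate. The
  Schwarz--Pick inequality for this pair of points, divided by \<open>1 - r\<close> and in the limit
  \<open>r \<rightarrow> 1\<close>, gives the Julia-type boundary inequality: the phase derivative is \<open>\<le> 0\<close> and its
  product with \<open>|sin \<omega>|\<close> is \<open>\<le> -|sin \<theta>|\<close>. Equality holds for the constants \<open>\<plusminus>1\<close> when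
  \<open>sin \<theta> = 0\<close>, and otherwise for the all-pass function \<open>\<plusminus>(a z + 1)/(z + a)\<close> interpolating
  \<open>cis \<theta>\<close> at \<open>z\<^sub>0\<close>, whose phase derivative there is \<open>(a\<^sup>2 - 1)/|z\<^sub>0 + a|\<^sup>2\<close>.\<close>

lemma norm_one_minus_cnj_mult_squared:
  fixes a b :: complex
  shows "(cmod (1 - cnj a * b))\<^sup>2 = (cmod (b - a))\<^sup>2 + (1 - (cmod a)\<^sup>2) * (1 - (cmod b)\<^sup>2)"
  unfolding cmod_power2 by (simp add: power2_eq_square algebra_simps)

lemma one_minus_cnj_mult_nonzero:
  fixes a b :: complex
  assumes "norm a < 1" "norm b < 1"
  shows "1 - cnj a * b \<noteq> 0"
proof
  assume "1 - cnj a * b = 0"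
  then have "cmod a * cmod b = 1" by (metis complex_mod_cnj norm_mult norm_one right_minus_eq)
  moreover have "cmod a * cmod b < 1 * 1"
    using assms by (intro mult_strict_mono') auto
  ultimately show False by simp
qed

lemma Schwarz_Pick_Moebius:
  assumes holh: "h holomorphic_on ball 0 1"
    and lt: "\<And>z. norm z < 1 \<Longrightarrow> norm (h z) < 1"
    and z: "norm z < 1" and w: "norm w < 1"
  shows "cmod (Moebius_function 0 (h w) (h z)) \<le> cmod (Moebius_function 0 w z)"
proof -
  define G where "G = Moebius_function 0 (h w) \<circ> h \<circ> Moebius_function 0 (-w)"
  have m1: "Moebius_function 0 (-w) ` ball 0 1 \<subseteq> ball 0 1"
    using Moebius_function_norm_lt_1 w by auto
  have "Moebius_function 0 (h w) \<circ> (h \<circ> Moebius_function 0 (-w)) holomorphic_on ball 0 1"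
  proof (rule holomorphic_on_compose_gen)
    show "h \<circ> Moebius_function 0 (-w) holomorphic_on ball 0 1"
      by (rule holomorphic_on_compose_gen[OF Moebius_function_holomorphic holh m1]) (use w in simp)
    show "Moebius_function 0 (h w) holomorphic_on ball 0 1"
      by (rule Moebius_function_holomorphic) (use lt w in simp)
    show "(h \<circ> Moebius_function 0 (-w)) ` ball 0 1 \<subseteq> ball 0 1"
      using m1 lt by (auto simp: image_comp)
  qed
  then have holG: "G holomorphic_on ball 0 1" by (simp add: G_def o_assoc)
  have G0: "G 0 = 0"
    by (simp add: G_def Moebius_function_of_zero Moebius_function_eq_zero)
  have Glt: "norm (G u) < 1" if "norm u < 1" for u
    unfolding G_def using that w lt Moebius_function_norm_lt_1 by auto
  have "norm (Moebius_function 0 w z) < 1"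
    using Moebius_function_norm_lt_1 w z by blast
  from Schwarz_Lemma(1)[OF holG G0 Glt this]
  have "cmod (G (Moebius_function 0 w z)) \<le> cmod (Moebius_function 0 w z)" .
  moreover have "Moebius_function 0 (-w) (Moebius_function 0 w z) = z"
    by (rule Moebius_function_compose) (use w z in auto)
  ultimately show ?thesis by (simp add: G_def)
qed

lemma Schwarz_Pick:
  assumes holh: "h holomorphic_on ball 0 1"
    and lt: "\<And>z. norm z < 1 \<Longrightarrow> norm (h z) < 1"
    and z: "norm z < 1" and w: "norm w < 1"
  shows "(1 - (cmod z)\<^sup>2) * (1 - (cmod w)\<^sup>2) * (cmod (1 - h z * cnj (h w)))\<^sup>2
       \<le> (1 - (cmod (h z))\<^sup>2) * (1 - (cmod (h w))\<^sup>2) * (cmod (1 - z * cnj w))\<^sup>2"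
proof -
  define Ah where "Ah = (cmod (1 - cnj (h w) * h z))\<^sup>2"
  define A where "A = (cmod (1 - cnj w * z))\<^sup>2"
  define Ph where "Ph = (1 - (cmod (h w))\<^sup>2) * (1 - (cmod (h z))\<^sup>2)"
  define P where "P = (1 - (cmod w)\<^sup>2) * (1 - (cmod z)\<^sup>2)"
  have "1 - cnj (h w) * h z \<noteq> 0" "1 - cnj w * z \<noteq> 0"
    by (intro one_minus_cnj_mult_nonzero lt z w)+
  then have Ahp: "Ah > 0" and Ap: "A > 0" by (simp_all add: Ah_def A_def)
  have "cmod ((h z - h w) / (1 - cnj (h w) * h z)) \<le> cmod ((z - w) / (1 - cnj w * z))"
    using Schwarz_Pick_Moebius[OF holh lt z w] by (simp add: Moebius_function_def)
  then have "(cmod ((h z - h w) / (1 - cnj (h w) * h z)))\<^sup>2 \<le> (cmod ((z - w) / (1 - cnj w * z)))\<^sup>2"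
    by (intro power_mono) auto
  then have "(cmod (h z - h w))\<^sup>2 / Ah \<le> (cmod (z - w))\<^sup>2 / A"
    by (simp add: Ah_def A_def norm_divide power_divide)
  then have "(cmod (h z - h w))\<^sup>2 / Ah * (Ah * A) \<le> (cmod (z - w))\<^sup>2 / A * (Ah * A)"
    by (rule mult_right_mono) (use Ahp Ap in simp)
  then have "(cmod (h z - h w))\<^sup>2 * A \<le> (cmod (z - w))\<^sup>2 * Ah"
    using Ahp Ap by (simp add: mult.commute mult.left_commute)
  moreover have "(cmod (h z - h w))\<^sup>2 = Ah - Ph" "(cmod (z - w))\<^sup>2 = A - P"
    using norm_one_minus_cnj_mult_squared[of "h w" "h z"] norm_one_minus_cnj_mult_squared[of w z]
    by (simp_all add: Ah_def Ph_def A_def P_def)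
  ultimately have "(Ah - Ph) * A \<le> (A - P) * Ah" by simp
  then have "P * Ah \<le> Ph * A" by (simp add: algebra_simps)
  then show ?thesis
    unfolding Ah_def A_def Ph_def P_def mult.commute[of "h z"] mult.commute[of z] by (simp only: mult_ac)
qed

lemma Schwarz_Pick_le:
  assumes holh: "h holomorphic_on ball 0 1"
    and le: "\<And>z. norm z < 1 \<Longrightarrow> norm (h z) \<le> 1"
    and z: "norm z < 1" and w: "norm w < 1"
  shows "(1 - (cmod z)\<^sup>2) * (1 - (cmod w)\<^sup>2) * (cmod (1 - h z * cnj (h w)))\<^sup>2
       \<le> (1 - (cmod (h z))\<^sup>2) * (1 - (cmod (h w))\<^sup>2) * (cmod (1 - z * cnj w))\<^sup>2"
proof (cases "\<forall>u. norm u < 1 \<longrightarrow> norm (h u) < 1")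
  case True
  then show ?thesis using Schwarz_Pick[OF holh _ z w] by blast
next
  case False
  then obtain \<xi> where xi: "norm \<xi> < 1" "norm (h \<xi>) = 1"
    using le by (meson le_less)
  have "h constant_on ball 0 1"
    by (rule maximum_modulus_principle[OF holh open_ball connected_ball open_ball subset_refl, of \<xi>])
       (use xi le in auto)
  then obtain c where c: "\<And>u. u \<in> ball 0 1 \<Longrightarrow> h u = c" by (auto simp: constant_on_def)
  have hz: "h z = c" and hw: "h w = c" using c z w by auto
  have nc: "norm c = 1" using c xi by force
  have "c * cnj c = 1" by (metis complex_norm_square nc of_real_1 power_one)
  then show ?thesis by (simp add: hz hw nc)
qed

lemma isCont_cis: "isCont cis t"
  using continuous_on_cis[OF continuous_on_id, of UNIV] by (simp add: continuous_on_eq_continuous_at)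

lemma cis_eq_imp_eq:
  assumes "cis a = cis b" "\<bar>a - b\<bar> < 2 * pi"
  shows "a = b"
proof -
  have "cis (a - b) = 1" using assms(1) by (simp add: cis_divide[symmetric])
  then have "exp (\<i> * complex_of_real (a - b)) = 1" by (simp add: cis_conv_exp)
  then obtain n :: int where n: "a - b = of_int (2 * n) * pi" by (auto simp: exp_eq_1)
  then have "\<bar>real_of_int n\<bar> * (2 * pi) < 1 * (2 * pi)" using assms(2) by (simp add: abs_mult)
  then have "\<bar>real_of_int n\<bar> < 1" by (simp only: mult_less_cancel_right) simp
  then have "n = 0" by linarith
  then show ?thesis using n by simp
qed

lemma has_phase_deriv_unique:
  assumes h1: "has_phase_deriv f \<omega> D1" and h2: "has_phase_deriv f \<omega> D2"
    and nz: "\<forall>\<^sub>F t in nhds \<omega>. f (cis t) \<noteq> 0"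
  shows "D1 = D2"
proof -
  obtain e1 \<theta>1 where "e1 > 0"
    and r1: "\<forall>t\<in>ball \<omega> e1. f (cis t) = complex_of_real (cmod (f (cis t))) * cis (\<theta>1 t)"
    and d1: "(\<theta>1 has_real_derivative D1) (at \<omega>)"
    using h1 unfolding has_phase_deriv_def by blast
  obtain e2 \<theta>2 where "e2 > 0"
    and r2: "\<forall>t\<in>ball \<omega> e2. f (cis t) = complex_of_real (cmod (f (cis t))) * cis (\<theta>2 t)"
    and d2: "(\<theta>2 has_real_derivative D2) (at \<omega>)"
    using h2 unfolding has_phase_deriv_def by blast
  define g where "g t = \<theta>1 t - \<theta>2 t" for t
  have dg: "(g has_real_derivative (D1 - D2)) (at \<omega>)"
    unfolding g_def by (intro derivative_intros d1 d2)
  have cis_g: "cis (g t) = 1" if "t \<in> ball \<omega> e1" "t \<in> ball \<omega> e2" "f (cis t) \<noteq> 0" for t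
  proof -
    have "cis (\<theta>1 t) = cis (\<theta>2 t)" using r1 r2 that by (metis mult_cancel_left of_real_eq_0_iff zero_less_norm_iff order.irrefl)
    then show ?thesis by (simp add: g_def cis_divide[symmetric])
  qed
  txt \<open>The two arguments differ by a multiple of \<open>2\<pi>\<close> that depends continuously on \<open>t\<close>.\<close>
  have "\<forall>\<^sub>F t in nhds \<omega>. g t = g \<omega>"
  proof -
    have "\<forall>\<^sub>F t in at \<omega>. dist (g t) (g \<omega>) < 2 * pi"
      using DERIV_isCont[OF dg] unfolding isCont_def by (intro tendstoD) auto
    then have "\<forall>\<^sub>F t in nhds \<omega>. \<bar>g t - g \<omega>\<bar> < 2 * pi"
      by (simp add: eventually_nhds_conv_at dist_real_def)
    moreover have "\<forall>\<^sub>F t in nhds \<omega>. t \<in> ball \<omega> e1 \<and> t \<in> ball \<omega> e2"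
      using \<open>e1 > 0\<close> \<open>e2 > 0\<close> by (intro eventually_conj eventually_nhds_in_open) auto
    moreover have "cis (g \<omega>) = 1"
      using cis_g \<open>e1 > 0\<close> \<open>e2 > 0\<close> eventually_nhds_x_imp_x[OF nz] by simp
    ultimately show ?thesis
      using nz by (elim eventually_rev_mp) (auto intro!: always_eventually cis_eq_imp_eq simp: cis_g)
  qed
  then have "(g has_real_derivative 0) (at \<omega>)"
    using DERIV_cong_ev[OF refl _ refl, of g "\<lambda>_. g \<omega>" \<omega> 0] by simp
  from DERIV_unique[OF dg this] show ?thesis by simp
qed

lemma continuous_argument_near_circle:
  assumes S: "open S" "cis \<omega> \<in> S" and holf: "f holomorphic_on S" and nz: "f (cis \<omega>) \<noteq> 0"
  obtains e where "e > 0"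
    "\<And>t. t \<in> ball \<omega> e \<Longrightarrow> f (cis t) = complex_of_real (cmod (f (cis t)))
        * cis (Arg (f (cis \<omega>)) + Im (Ln (f (cis t) / f (cis \<omega>))))"
    "continuous_on (ball \<omega> e) (\<lambda>t. Arg (f (cis \<omega>)) + Im (Ln (f (cis t) / f (cis \<omega>))))"
proof -
  define c0 where "c0 = f (cis \<omega>)"
  define x where "x t = f (cis t) / c0" for t
  define T where "T = cis -` S"
  have oT: "open T" unfolding T_def by (rule continuous_open_vimage[OF S(1) isCont_cis])
  have contx: "continuous_on T x"
    unfolding x_def T_def
    by (intro continuous_intros continuous_on_compose2[OF holomorphic_on_imp_continuous_on[OF holf]])
       (auto simp: c0_def nz)
  have "isCont x \<omega>" using contx oT S(2) by (simp add: T_def continuous_on_eq_continuous_at)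
  moreover have "x \<omega> = 1" using nz by (simp add: x_def c0_def)
  txt \<open>Near \<open>\<omega>\<close> the quotient \<open>x t\<close> stays in the right half-plane, where \<open>Ln\<close> is continuous.\<close>
  ultimately have "\<forall>\<^sub>F t in nhds \<omega>. Re (x t) > 0"
    unfolding isCont_def eventually_nhds_conv_at by (auto intro: order_tendstoD tendsto_Re)
  moreover have "\<forall>\<^sub>F t in nhds \<omega>. t \<in> T" using oT S(2) by (intro eventually_nhds_in_open) (auto simp: T_def)
  ultimately have "\<forall>\<^sub>F t in nhds \<omega>. Re (x t) > 0 \<and> t \<in> T" by (rule eventually_conj)
  then obtain e where "e > 0" and e: "\<And>t. t \<in> ball \<omega> e \<Longrightarrow> Re (x t) > 0 \<and> t \<in> T"
    unfolding eventually_nhds_metric by (auto simp: dist_commute)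
  have "f (cis t) = complex_of_real (cmod (f (cis t))) * cis (Arg c0 + Im (Ln (x t)))"
    if "t \<in> ball \<omega> e" for t
  proof -
    have "x t \<noteq> 0" using e[OF that] by auto
    then have "x t = complex_of_real (cmod (x t)) * cis (Im (Ln (x t)))"
      by (metis exp_Ln exp_eq_polar norm_exp_eq_Re)
    moreover have "c0 = complex_of_real (cmod c0) * cis (Arg c0)"
      by (metis rcis_cmod_Arg rcis_def)
    moreover have "f (cis t) = c0 * x t" using nz by (simp add: x_def c0_def)
    ultimately show ?thesis
      by (simp add: norm_mult cis_mult[symmetric] mult_ac)
  qed
  moreover have "continuous_on (ball \<omega> e) (\<lambda>t. Arg c0 + Im (Ln (x t)))"
  proof (intro continuous_intros continuous_on_Ln')
    show "continuous_on (ball \<omega> e) x" by (rule continuous_on_subset[OF contx]) (use e in auto)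
    show "x t \<notin> \<real>\<^sub>\<le>\<^sub>0" if "t \<in> ball \<omega> e" for t
      using e[OF that] by (auto simp: complex_nonpos_Reals_iff)
  qed
  ultimately show thesis using \<open>e > 0\<close> that unfolding x_def c0_def by blast
qed

lemma has_real_derivative_Im_Ln_circle:
  assumes df: "(f has_field_derivative c) (at (cis \<omega>))" and nz: "f (cis \<omega>) \<noteq> 0"
  shows "((\<lambda>t. Im (Ln (f (cis t) / f (cis \<omega>)))) has_real_derivative Re (cis \<omega> * c / f (cis \<omega>))) (at \<omega>)"
proof -
  define c0 where "c0 = f (cis \<omega>)"
  have x1: "f (exp (\<i> * of_real \<omega>)) / c0 = 1" using nz by (simp add: c0_def cis_conv_exp[symmetric])
  have dexp: "((\<lambda>s. exp (\<i> * s)) has_field_derivative exp (\<i> * of_real \<omega>) * \<i>) (at (of_real \<omega>))"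
    by (auto intro!: derivative_eq_intros)
  have dx: "((\<lambda>s. f (exp (\<i> * s)) / c0) has_field_derivative c * (exp (\<i> * of_real \<omega>) * \<i>) / c0)
          (at (of_real \<omega>))"
    using DERIV_cdivide[OF DERIV_chain2[OF df[unfolded cis_conv_exp] dexp]] .
  have "((\<lambda>s. Ln (f (exp (\<i> * s)) / c0)) has_field_derivative
          inverse 1 * (c * (exp (\<i> * of_real \<omega>) * \<i>) / c0)) (at (of_real \<omega>))"
  proof (rule DERIV_chain2[OF _ dx])
    show "(Ln has_field_derivative inverse 1) (at (f (exp (\<i> * of_real \<omega>)) / c0))"
      unfolding x1 by (rule has_field_derivative_Ln) (simp add: complex_nonpos_Reals_iff)
  qed
  then have "((\<lambda>t. Im (Ln (f (exp (\<i> * of_real t)) / c0))) has_real_derivative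
              Im (inverse 1 * (c * (exp (\<i> * of_real \<omega>) * \<i>) / c0))) (at \<omega>)"
    by (intro has_field_derivative_Im has_vector_derivative_real_field)
  moreover have "Im (inverse 1 * (c * (exp (\<i> * of_real \<omega>) * \<i>) / c0)) = Re (cis \<omega> * c / c0)"
    by (simp add: cis_conv_exp[symmetric] Im_divide Re_divide algebra_simps)
  ultimately show ?thesis by (simp add: c0_def cis_conv_exp)
qed

lemma has_phase_deriv_holomorphic:
  assumes S: "open S" "cis \<omega> \<in> S" and holf: "f holomorphic_on S" and nz: "f (cis \<omega>) \<noteq> 0"
  shows "has_phase_deriv f \<omega> (Re (cis \<omega> * deriv f (cis \<omega>) / f (cis \<omega>)))"
proof -
  define \<theta> where "\<theta> t = Arg (f (cis \<omega>)) + Im (Ln (f (cis t) / f (cis \<omega>)))" for t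
  obtain e where "e > 0" "\<And>t. t \<in> ball \<omega> e \<Longrightarrow> f (cis t) = complex_of_real (cmod (f (cis t))) * cis (\<theta> t)"
    "continuous_on (ball \<omega> e) \<theta>"
    using continuous_argument_near_circle[OF assms] unfolding \<theta>_def[abs_def] by metis
  moreover have "(\<theta> has_real_derivative Re (cis \<omega> * deriv f (cis \<omega>) / f (cis \<omega>))) (at \<omega>)"
    using DERIV_add[OF DERIV_const has_real_derivative_Im_Ln_circle[OF holomorphic_derivI[OF holf S] nz]]
    by (simp add: \<theta>_def[abs_def])
  ultimately show ?thesis unfolding has_phase_deriv_def by blast
qed

lemma phase_deriv_holomorphic:
  assumes "open S" "cis \<omega> \<in> S" "f holomorphic_on S" "f (cis \<omega>) \<noteq> 0"
  shows "phase_deriv f \<omega> = Re (cis \<omega> * deriv f (cis \<omega>) / f (cis \<omega>))"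
  unfolding phase_deriv_def
proof (rule the_equality)
  show "has_phase_deriv f \<omega> (Re (cis \<omega> * deriv f (cis \<omega>) / f (cis \<omega>)))"
    by (rule has_phase_deriv_holomorphic[OF assms])
  have "isCont (\<lambda>t. f (cis t)) \<omega>"
    using isCont_cis holomorphic_on_imp_continuous_on[OF assms(3)] assms(1,2)
    by (metis continuous_on_eq_continuous_at isCont_o2)
  then have "\<forall>\<^sub>F t in nhds \<omega>. f (cis t) \<noteq> 0"
    using assms(4) unfolding isCont_def eventually_nhds_conv_at by (auto intro: tendsto_imp_eventually_ne)
  then show "D = Re (cis \<omega> * deriv f (cis \<omega>) / f (cis \<omega>))" if "has_phase_deriv f \<omega> D" for D
    using has_phase_deriv_unique[OF that has_phase_deriv_holomorphic[OF assms]] by blast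
qed

lemma RH_inf_holomorphic_outside_disc:
  assumes "f \<in> RH_inf"
  obtains S where "open S" "{z. 1 \<le> cmod z} \<subseteq> S" "f holomorphic_on S"
proof -
  obtain p q :: "real poly"
    where roots: "\<forall>z. poly (map_poly complex_of_real q) z = 0 \<longrightarrow> cmod z < 1"
      and feq: "f = (\<lambda>z. poly (map_poly complex_of_real p) z / poly (map_poly complex_of_real q) z)"
    using assms unfolding RH_inf_def by blast
  define S where "S = {z. poly (map_poly complex_of_real q) z \<noteq> 0}"
  have "open S" unfolding S_def by (intro open_Collect_neq continuous_intros)
  moreover have "{z. 1 \<le> cmod z} \<subseteq> S" using roots by (force simp: S_def)
  moreover have "f holomorphic_on S" unfolding feq S_def by (intro holomorphic_intros) auto
  ultimately show thesis by (rule that)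
qed

lemma RH_inf_cnj:
  assumes "f \<in> RH_inf"
  shows "f (cnj z) = cnj (f z)"
proof -
  obtain p q :: "real poly"
    where feq: "f = (\<lambda>z. poly (map_poly complex_of_real p) z / poly (map_poly complex_of_real q) z)"
    using assms unfolding RH_inf_def by blast
  have "poly.coeff (map_poly complex_of_real r) n \<in> \<real>" for r :: "real poly" and n
    by (simp add: coeff_map_poly)
  then show ?thesis unfolding feq by (simp add: poly_cnj_real)
qed

lemma poly_reflect_poly_quotient:
  fixes p q :: "'a::field poly"
  assumes "degree p \<le> degree q" "w \<noteq> 0"
  shows "w ^ (degree q - degree p) * poly (reflect_poly p) w / poly (reflect_poly q) w
       = poly p (inverse w) / poly q (inverse w)"
proof -
  have "w ^ (degree q - degree p) * poly (reflect_poly p) w / poly (reflect_poly q) w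
      = (w ^ (degree q - degree p) * w ^ degree p) * poly p (inverse w) / (w ^ degree q * poly q (inverse w))"
    using assms(2) by (simp add: poly_reflect_poly_nz mult_ac)
  also have "w ^ (degree q - degree p) * w ^ degree p = w ^ degree q"
    using assms(1) by (simp add: power_add[symmetric])
  finally show ?thesis using assms(2) by simp
qed

lemma RH_inf_reflection:
  assumes "f \<in> RH_inf" and bnd: "\<And>u. cmod u = 1 \<Longrightarrow> cmod (f u) \<le> 1"
  obtains H where "H holomorphic_on ball 0 1" "\<And>w. norm w < 1 \<Longrightarrow> norm (H w) \<le> 1"
    "\<And>w. w \<noteq> 0 \<Longrightarrow> H w = f (inverse w)"
proof -
  obtain p q :: "real poly" where q0: "q \<noteq> 0" and deg: "degree p \<le> degree q"
    and roots: "\<forall>z. poly (map_poly complex_of_real q) z = 0 \<longrightarrow> cmod z < 1"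
    and feq: "f = (\<lambda>z. poly (map_poly complex_of_real p) z / poly (map_poly complex_of_real q) z)"
    using assms unfolding RH_inf_def by blast
  define pc where "pc = map_poly complex_of_real p"
  define qc where "qc = map_poly complex_of_real q"
  have deg': "degree pc \<le> degree qc" using deg by (simp add: pc_def qc_def degree_map_poly)
  have qc0: "qc \<noteq> 0" unfolding qc_def using q0 by (simp add: map_poly_eq_0_iff)
  define H where "H w = w ^ (degree qc - degree pc) * poly (reflect_poly pc) w / poly (reflect_poly qc) w" for w
  have HF: "H w = f (inverse w)" if "w \<noteq> 0" for w
    using poly_reflect_poly_quotient[OF deg' that] by (simp add: H_def feq pc_def qc_def)
  define S where "S = {w. poly (reflect_poly qc) w \<noteq> 0}"
  have holS: "H holomorphic_on S" unfolding H_def S_def by (intro holomorphic_intros) auto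
  have cball: "cball 0 1 \<subseteq> S"
  proof
    fix w :: complex assume "w \<in> cball 0 1"
    show "w \<in> S"
    proof (cases "w = 0")
      case True then show ?thesis using qc0 by (simp add: S_def)
    next
      case False
      with \<open>w \<in> cball 0 1\<close> have "1 \<le> cmod (inverse w)" by (simp add: norm_inverse one_le_inverse_iff)
      then have "poly qc (inverse w) \<noteq> 0" using roots by (force simp: qc_def)
      then show ?thesis using False by (simp add: S_def poly_reflect_poly_nz)
    qed
  qed
  have holH: "H holomorphic_on ball 0 1" by (rule holomorphic_on_subset[OF holS]) (use cball in auto)
  have "norm (H w) \<le> 1" if "norm w < 1" for w
  proof (rule maximum_modulus_frontier[of H "ball 0 1"])
    show "H holomorphic_on interior (ball 0 1)" using holH by simp
    show "continuous_on (closure (ball 0 1)) H"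
      using holomorphic_on_imp_continuous_on[OF holS] cball by (simp add: continuous_on_subset)
    show "norm (H u) \<le> 1" if "u \<in> frontier (ball 0 1)" for u
    proof -
      have "cmod u = 1" "u \<noteq> 0" using that by auto
      then show ?thesis using HF[of u] bnd[of "inverse u"] by (simp add: norm_inverse)
    qed
  qed (use that in auto)
  with holH HF show thesis using that by blast
qed

lemma RF_norm_le_1:
  assumes "f \<in> RF \<omega> \<theta>" "cmod u = 1"
  shows "cmod (f u) \<le> 1"
proof -
  have fR: "f \<in> RH_inf" and hn: "hinf_norm f = 1" using assms(1) by (auto simp: RF_def)
  obtain S where S: "open S" "{z. 1 \<le> cmod z} \<subseteq> S" "f holomorphic_on S"
    by (rule RH_inf_holomorphic_outside_disc[OF fR])
  have "continuous_on UNIV (\<lambda>t. f (cis t))"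
    by (rule continuous_on_compose2[OF holomorphic_on_imp_continuous_on[OF S(3)]])
       (use S(2) in \<open>auto intro!: continuous_intros\<close>)
  then have "compact ((\<lambda>t. cmod (f (cis t))) ` {-pi..pi})"
    by (intro compact_continuous_image continuous_intros) (auto intro: continuous_on_subset)
  then have "bdd_above ((\<lambda>t. cmod (f (cis t))) ` {-pi<..pi})"
    by (rule bdd_above_mono[OF bounded_imp_bdd_above[OF compact_imp_bounded]]) auto
  moreover have "Arg u \<in> {-pi<..pi}" using Arg_bounded[of u] by auto
  ultimately have "cmod (f (cis (Arg u))) \<le> hinf_norm f"
    unfolding hinf_norm_def by (rule cSUP_upper[rotated])
  moreover have "u \<noteq> 0" using assms(2) by auto
  then have "cis (Arg u) = u" using assms(2) by (simp add: cis_Arg sgn_div_norm)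
  ultimately have "cmod (f u) \<le> hinf_norm f" by simp
  then show ?thesis using hn by simp
qed

lemma reflected_Schwarz_Pick:
  assumes holH: "H holomorphic_on ball 0 1" and Hle: "\<And>w. norm w < 1 \<Longrightarrow> norm (H w) \<le> 1"
    and Hf: "\<And>w. w \<noteq> 0 \<Longrightarrow> H w = f (inverse w)"
    and sym: "\<And>z. f (cnj z) = cnj (f z)"
    and z0: "cmod z0 = 1" and r: "0 < r" "r < 1"
  shows "cmod (f (z0 / of_real r)) \<le> 1"
    and "(1 - r\<^sup>2) * cmod (1 - (f (z0 / of_real r))\<^sup>2)
         \<le> (1 - (cmod (f (z0 / of_real r)))\<^sup>2) * cmod (1 - (of_real r)\<^sup>2 * z0\<^sup>2)"
proof -
  let ?F = "f (z0 / of_real r)"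
  txt \<open>\<open>H\<close> maps \<open>z\<close> to \<open>?F\<close> and, by the real symmetry of \<open>f\<close>, \<open>w\<close> to \<open>cnj ?F\<close>.\<close>
  define z where "z = complex_of_real r * cnj z0"
  define w where "w = complex_of_real r * z0"
  have nz: "norm z = r" "norm w = r" using r z0 by (auto simp: z_def w_def norm_mult)
  have "z0 * cnj z0 = 1" by (metis complex_norm_square z0 of_real_1 power_one)
  then have "inverse (cnj z0) = z0" "inverse z0 = cnj z0"
    by (simp_all add: inverse_unique mult.commute)
  then have "inverse z = z0 / of_real r" "inverse w = cnj (z0 / of_real r)"
    by (simp_all add: z_def w_def divide_inverse_commute)
  moreover have "z \<noteq> 0" "w \<noteq> 0" using nz r by auto
  ultimately have Hz: "H z = ?F" and Hw: "H w = cnj ?F"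
    using Hf[of z] Hf[of w] sym[of "z0 / of_real r"] by simp_all
  show Fle: "cmod ?F \<le> 1" using Hle[of z] nz r Hz by auto
  have pick: "(1 - (cmod z)\<^sup>2) * (1 - (cmod w)\<^sup>2) * (cmod (1 - H z * cnj (H w)))\<^sup>2
      \<le> (1 - (cmod (H z))\<^sup>2) * (1 - (cmod (H w))\<^sup>2) * (cmod (1 - z * cnj w))\<^sup>2"
    by (rule Schwarz_Pick_le[OF holH Hle]) (use nz r in auto)
  have e: "1 - z * cnj w = cnj (1 - (complex_of_real r)\<^sup>2 * z0\<^sup>2)"
    by (simp add: z_def w_def power2_eq_square mult_ac)
  have "((1 - r\<^sup>2) * cmod (1 - ?F\<^sup>2))\<^sup>2 \<le> ((1 - (cmod ?F)\<^sup>2) * cmod (1 - (of_real r)\<^sup>2 * z0\<^sup>2))\<^sup>2"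
    using pick unfolding Hz Hw e complex_mod_cnj complex_cnj_cnj nz
    by (simp add: power2_eq_square mult_ac)
  moreover have "0 \<le> (1 - (cmod ?F)\<^sup>2) * cmod (1 - (of_real r)\<^sup>2 * z0\<^sup>2)"
    using power_le_one[OF norm_ge_zero Fle, of 2] by simp
  ultimately show "(1 - r\<^sup>2) * cmod (1 - ?F\<^sup>2) \<le> (1 - (cmod ?F)\<^sup>2) * cmod (1 - (of_real r)\<^sup>2 * z0\<^sup>2)"
    by (rule power2_le_imp_le)
qed

lemma radial_difference_quotient:
  fixes f :: "complex \<Rightarrow> complex"
  assumes df: "(f has_field_derivative c) (at z0)" and "z0 \<noteq> 0"
  shows "((\<lambda>r. (f z0 - f (z0 / of_real r)) / of_real (1 - r)) \<longlongrightarrow> - (z0 * c)) (at_left 1)"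
proof -
  define y where "y r = z0 / complex_of_real r" for r
  have evr: "\<forall>\<^sub>F r in at_left (1::real). r \<in> {0<..<1}" by (rule eventually_at_left_real) simp
  have "((\<lambda>r. z0 / complex_of_real r) \<longlongrightarrow> z0 / complex_of_real 1) (at_left 1)"
    by (intro tendsto_intros) auto
  then have y1: "(y \<longlongrightarrow> z0) (at_left 1)" by (simp add: y_def[abs_def])
  have "\<forall>\<^sub>F r in at_left 1. y r \<noteq> z0"
    using evr by eventually_elim (use \<open>z0 \<noteq> 0\<close> in \<open>auto simp: y_def divide_eq_eq\<close>)
  with y1 have "filterlim y (at z0) (at_left 1)" by (rule filterlim_atI)
  from filterlim_compose[OF df[unfolded has_field_derivative_iff] this]
  have "((\<lambda>r. (f (y r) - f z0) / (y r - z0)) \<longlongrightarrow> c) (at_left 1)" by (simp add: o_def)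
  then have "((\<lambda>r. - ((f (y r) - f z0) / (y r - z0)) * y r) \<longlongrightarrow> - c * z0) (at_left 1)"
    by (intro tendsto_intros y1)
  moreover have "\<forall>\<^sub>F r in at_left 1. - ((f (y r) - f z0) / (y r - z0)) * y r
      = (f z0 - f (z0 / of_real r)) / of_real (1 - r)"
    using evr by eventually_elim (use \<open>z0 \<noteq> 0\<close> in \<open>auto simp: y_def field_simps\<close>)
  ultimately have "((\<lambda>r. (f z0 - f (z0 / of_real r)) / of_real (1 - r)) \<longlongrightarrow> - c * z0) (at_left 1)"
    by (rule Lim_transform_eventually)
  then show ?thesis by (simp only: mult.commute[of z0 c] mult_minus_left)
qed

lemma unit_defect_eq:
  fixes t a :: complex
  assumes "cmod t = 1"
  shows "1 - (cmod a)\<^sup>2 = Re (cnj t * (t - a)) + Re (a * cnj (t - a))"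
proof -
  have "(Re t)\<^sup>2 + (Im t)\<^sup>2 = 1" using assms by (simp add: cmod_power2[symmetric])
  then show ?thesis unfolding cmod_power2 by (simp add: power2_eq_square algebra_simps)
qed

lemma tendsto_radial:
  fixes f :: "complex \<Rightarrow> 'a::topological_space"
  assumes "isCont f z0"
  shows "((\<lambda>r. f (z0 / of_real r)) \<longlongrightarrow> f z0) (at_left 1)"
proof -
  have "((\<lambda>r. z0 / complex_of_real r) \<longlongrightarrow> z0 / complex_of_real 1) (at_left 1)"
    by (intro tendsto_intros) auto
  then show ?thesis using isCont_tendsto_compose[OF assms] by simp
qed

lemma radial_norm_defect_tendsto:
  fixes f :: "complex \<Rightarrow> complex"
  assumes df: "(f has_field_derivative c) (at z0)" and "z0 \<noteq> 0" and tau: "cmod (f z0) = 1"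
  shows "((\<lambda>r. (1 - (cmod (f (z0 / of_real r)))\<^sup>2) / (1 - r)) \<longlongrightarrow> - 2 * Re (z0 * c / f z0)) (at_left 1)"
proof -
  define \<tau> where "\<tau> = f z0"
  define F where "F r = f (z0 / of_real r)" for r
  define q where "q r = (\<tau> - F r) / of_real (1 - r)" for r
  have "(F \<longlongrightarrow> \<tau>) (at_left 1)"
    unfolding F_def \<tau>_def by (rule tendsto_radial[OF DERIV_isCont[OF df]])
  moreover have "(q \<longlongrightarrow> - (z0 * c)) (at_left 1)"
    unfolding q_def F_def \<tau>_def by (rule radial_difference_quotient[OF df \<open>z0 \<noteq> 0\<close>])
  ultimately have "((\<lambda>r. Re (cnj \<tau> * q r) + Re (F r * cnj (q r)))
         \<longlongrightarrow> Re (cnj \<tau> * - (z0 * c)) + Re (\<tau> * cnj (- (z0 * c)))) (at_left 1)"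
    by (intro tendsto_intros)
  moreover have "Re (cnj \<tau> * - (z0 * c)) + Re (\<tau> * cnj (- (z0 * c))) = - 2 * Re (z0 * c / f z0)"
    using tau by (simp add: \<tau>_def divide_conv_cnj algebra_simps)
  moreover have "Re (cnj \<tau> * q r) + Re (F r * cnj (q r)) = (1 - (cmod (F r))\<^sup>2) / (1 - r)" for r
  proof -
    have "Re (cnj \<tau> * q r) + Re (F r * cnj (q r))
        = (Re (cnj \<tau> * (\<tau> - F r)) + Re (F r * cnj (\<tau> - F r))) / (1 - r)"
      unfolding q_def by (simp only: times_divide_eq_right complex_cnj_divide complex_cnj_complex_of_real
          Re_divide_of_real add_divide_distrib)
    then show ?thesis unfolding unit_defect_eq[OF tau[folded \<tau>_def]] .
  qed
  ultimately show ?thesis by (simp add: F_def)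
qed

lemma boundary_phase_inequality:
  fixes f :: "complex \<Rightarrow> complex"
  assumes df: "(f has_field_derivative c) (at z0)" and z0: "cmod z0 = 1" and tau: "cmod (f z0) = 1"
    and ineq: "\<And>r. 0 < r \<Longrightarrow> r < 1 \<Longrightarrow> cmod (f (z0 / of_real r)) \<le> 1 \<and>
      (1 - r\<^sup>2) * cmod (1 - (f (z0 / of_real r))\<^sup>2)
        \<le> (1 - (cmod (f (z0 / of_real r)))\<^sup>2) * cmod (1 - (of_real r)\<^sup>2 * z0\<^sup>2)"
  shows "Re (z0 * c / f z0) \<le> 0"
    and "Re (z0 * c / f z0) * cmod (1 - z0\<^sup>2) \<le> - cmod (1 - (f z0)\<^sup>2)"
proof -
  define F where "F r = f (z0 / of_real r)" for r
  define N where "N r = (1 - (cmod (F r))\<^sup>2) / (1 - r)" for r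
  define D where "D = Re (z0 * c / f z0)"
  have TF: "(F \<longlongrightarrow> f z0) (at_left 1)"
    unfolding F_def by (rule tendsto_radial[OF DERIV_isCont[OF df]])
  have TN: "(N \<longlongrightarrow> - 2 * D) (at_left 1)"
    unfolding N_def F_def D_def using z0 by (intro radial_norm_defect_tendsto[OF df _ tau]) auto
  have "\<forall>\<^sub>F r in at_left (1::real). r \<in> {0<..<1}" by (rule eventually_at_left_real) simp
  then have "\<forall>\<^sub>F r in at_left 1. 0 \<le> N r \<and>
      cmod (1 - (F r)\<^sup>2) \<le> N r / (1 + r) * cmod (1 - (complex_of_real r)\<^sup>2 * z0\<^sup>2)"
  proof eventually_elim
    case (elim r)
    have "1 - r\<^sup>2 = (1 - r) * (1 + r)" by (simp add: power2_eq_square algebra_simps)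
    moreover have "(1 - r) * (1 + r) > 0" using elim by simp
    moreover have "0 \<le> 1 - (cmod (F r))\<^sup>2"
      using ineq[of r] elim power_le_one[of "cmod (F r)" 2] by (simp add: F_def)
    ultimately show ?case using ineq[of r] elim
      by (simp add: N_def F_def field_simps)
  qed
  then have ev_pos: "\<forall>\<^sub>F r in at_left 1. 0 \<le> N r"
    and ev_le: "\<forall>\<^sub>F r in at_left 1.
      cmod (1 - (F r)\<^sup>2) \<le> N r / (1 + r) * cmod (1 - (complex_of_real r)\<^sup>2 * z0\<^sup>2)"
    by (auto elim: eventually_mono)
  have "0 \<le> - 2 * D"
    by (rule tendsto_le[OF _ TN tendsto_const ev_pos]) simp
  moreover have "cmod (1 - (f z0)\<^sup>2) \<le> (- 2 * D) / (1 + 1) * cmod (1 - (complex_of_real 1)\<^sup>2 * z0\<^sup>2)"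
  proof (rule tendsto_le[OF _ _ _ ev_le])
    show "((\<lambda>r. N r / (1 + r) * cmod (1 - (complex_of_real r)\<^sup>2 * z0\<^sup>2)) \<longlongrightarrow>
        (- 2 * D) / (1 + 1) * cmod (1 - (complex_of_real 1)\<^sup>2 * z0\<^sup>2)) (at_left 1)"
      by (intro tendsto_intros TN) auto
    show "((\<lambda>r. cmod (1 - (F r)\<^sup>2)) \<longlongrightarrow> cmod (1 - (f z0)\<^sup>2)) (at_left 1)"
      by (intro tendsto_intros TF)
  qed simp
  ultimately show "Re (z0 * c / f z0) \<le> 0"
    and "Re (z0 * c / f z0) * cmod (1 - z0\<^sup>2) \<le> - cmod (1 - (f z0)\<^sup>2)"
    by (simp_all add: D_def)
qed

lemma cmod_one_minus_cis_squared: "cmod (1 - (cis x)\<^sup>2) = 2 * \<bar>sin x\<bar>"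
proof -
  have "(cis x)\<^sup>2 = cis (2 * x)" by (metis cis_mult mult_2 power2_eq_square)
  then have "(cmod (1 - (cis x)\<^sup>2))\<^sup>2 = (1 - cos (2 * x))\<^sup>2 + (sin (2 * x))\<^sup>2"
    unfolding cmod_power2 by simp
  also have "\<dots> = (2 * (sin x)\<^sup>2)\<^sup>2 + (2 * sin x * cos x)\<^sup>2"
    by (simp only: cos_double_sin sin_double) simp
  also have "\<dots> = 4 * (sin x)\<^sup>2 * ((sin x)\<^sup>2 + (cos x)\<^sup>2)"
    by algebra
  also have "\<dots> = (2 * \<bar>sin x\<bar>)\<^sup>2" by (simp add: power_mult_distrib)
  finally show ?thesis by (rule power2_eq_imp_eq) auto
qed

lemma RF_phase_deriv_bound:
  assumes "f \<in> RF \<omega> \<theta>"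
  shows "phase_deriv f \<omega> \<le> 0" and "phase_deriv f \<omega> * \<bar>sin \<omega>\<bar> \<le> - \<bar>sin \<theta>\<bar>"
proof -
  have fR: "f \<in> RH_inf" and fz: "f (cis \<omega>) = cis \<theta>" using assms by (auto simp: RF_def)
  obtain S where S: "open S" "{z. 1 \<le> cmod z} \<subseteq> S" "f holomorphic_on S"
    by (rule RH_inf_holomorphic_outside_disc[OF fR])
  obtain H where H: "H holomorphic_on ball 0 1" "\<And>w. norm w < 1 \<Longrightarrow> norm (H w) \<le> 1"
    "\<And>w. w \<noteq> 0 \<Longrightarrow> H w = f (inverse w)"
    using RH_inf_reflection[OF fR RF_norm_le_1[OF assms]] by metis
  have cS: "cis \<omega> \<in> S" using S(2) by auto
  have pd: "phase_deriv f \<omega> = Re (cis \<omega> * deriv f (cis \<omega>) / f (cis \<omega>))"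
    by (rule phase_deriv_holomorphic[OF S(1) cS S(3)]) (simp add: fz)
  have "Re (cis \<omega> * deriv f (cis \<omega>) / f (cis \<omega>)) \<le> 0 \<and>
      Re (cis \<omega> * deriv f (cis \<omega>) / f (cis \<omega>)) * cmod (1 - (cis \<omega>)\<^sup>2) \<le> - cmod (1 - (f (cis \<omega>))\<^sup>2)"
    using boundary_phase_inequality[OF holomorphic_derivI[OF S(3) S(1) cS]]
      reflected_Schwarz_Pick[OF H RH_inf_cnj[OF fR]] by (simp add: fz)
  then show "phase_deriv f \<omega> \<le> 0" "phase_deriv f \<omega> * \<bar>sin \<omega>\<bar> \<le> - \<bar>sin \<theta>\<bar>"
    by (simp_all add: pd fz cmod_one_minus_cis_squared mult.commute)
qed

lemma phase_deriv_const:
  assumes "c \<noteq> 0"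
  shows "phase_deriv (\<lambda>z. c) \<omega> = 0"
  using phase_deriv_holomorphic[of UNIV \<omega> "\<lambda>z. c"] assms by simp

lemma const_in_RF:
  assumes "c \<in> {1, -1}"
  shows "(\<lambda>z. c) \<in> RF \<omega> \<theta> \<longleftrightarrow> c = cis \<theta>"
proof -
  have "(\<lambda>z. c) \<in> RH_inf"
    unfolding RH_inf_def
    by (rule CollectI, rule exI[of _ "[:Re c:]"], rule exI[of _ 1]) (use assms in \<open>auto simp: fun_eq_iff map_poly_pCons\<close>)
  moreover have "hinf_norm (\<lambda>z. c) = 1" using assms by (auto simp: hinf_norm_def)
  ultimately show ?thesis using assms by (auto simp: RF_def)
qed

definition allpass :: "complex \<Rightarrow> real \<Rightarrow> complex \<Rightarrow> complex" where
  "allpass s a z = s * (of_real a * z + 1) / (z + of_real a)"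

lemma allpass_denominator_nonzero:
  assumes "\<bar>a\<bar> < 1" "1 \<le> cmod z"
  shows "z + of_real a \<noteq> 0"
proof
  assume "z + of_real a = 0"
  then have "cmod z = cmod (of_real a :: complex)" by (metis norm_minus_cancel neg_eq_iff_add_eq_0)
  with assms show False by simp
qed

lemma allpass_in_RH_inf:
  assumes "s \<in> \<real>" "\<bar>a\<bar> < 1"
  shows "allpass s a \<in> RH_inf"
proof -
  obtain sr where s: "s = of_real sr" using assms(1) by (auto elim: Reals_cases)
  have "allpass s a = (\<lambda>z. poly (map_poly complex_of_real [:sr, sr * a:]) z
                          / poly (map_poly complex_of_real [:a, 1:]) z)"
    by (auto simp: allpass_def s fun_eq_iff map_poly_pCons algebra_simps)
  moreover have "cmod z < 1" if "poly (map_poly complex_of_real [:a, 1:]) z = 0" for z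
    using that allpass_denominator_nonzero[OF assms(2), of z] by (force simp: map_poly_pCons add.commute)
  ultimately show ?thesis unfolding RH_inf_def by (intro CollectI exI[of _ "[:sr, sr * a:]"] exI[of _ "[:a, 1:]"]) auto
qed

lemma allpass_unit_circle:
  assumes "\<bar>a\<bar> < 1" "cmod z = 1"
  shows "allpass s a z = s * z * cnj (z + of_real a) / (z + of_real a)"
    and "cmod (allpass s a z) = cmod s"
proof -
  have "z * cnj z = 1" by (metis complex_norm_square assms(2) of_real_1 power_one)
  then have num: "of_real a * z + 1 = z * cnj (z + of_real a)" by (simp add: algebra_simps)
  then show "allpass s a z = s * z * cnj (z + of_real a) / (z + of_real a)"
    by (simp add: allpass_def mult.assoc)
  have "z + of_real a \<noteq> 0" using allpass_denominator_nonzero assms by simp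
  moreover have "cmod (of_real a * z + 1) = cmod (z + of_real a)"
    unfolding num norm_mult complex_mod_cnj using assms(2) by simp
  ultimately show "cmod (allpass s a z) = cmod s"
    by (simp add: allpass_def norm_mult norm_divide)
qed

lemma hinf_norm_allpass:
  assumes "\<bar>a\<bar> < 1"
  shows "hinf_norm (allpass s a) = cmod s"
  using allpass_unit_circle(2)[OF assms] by (simp add: hinf_norm_def)

lemma phase_deriv_allpass:
  assumes "s \<noteq> 0" "\<bar>a\<bar> < 1"
  shows "phase_deriv (allpass s a) \<omega> = (a\<^sup>2 - 1) / (cmod (cis \<omega> + of_real a))\<^sup>2"
proof -
  define z where "z = cis \<omega>"
  define W where "W = z + of_real a"
  define S where "S = {z. z + complex_of_real a \<noteq> 0}"
  have W: "W \<noteq> 0" using allpass_denominator_nonzero[OF assms(2)] by (simp add: W_def z_def)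
  have "open S" unfolding S_def by (intro open_Collect_neq continuous_intros)
  moreover have "z \<in> S" using W by (simp add: S_def W_def)
  moreover have "allpass s a holomorphic_on S"
    unfolding allpass_def[abs_def] S_def by (intro holomorphic_intros) auto
  moreover have "allpass s a z \<noteq> 0"
    using allpass_unit_circle(2)[OF assms(2), of z s] assms(1) by (auto simp: z_def)
  ultimately have "phase_deriv (allpass s a) \<omega> = Re (z * deriv (allpass s a) z / allpass s a z)"
    unfolding z_def by (rule phase_deriv_holomorphic)
  also have "deriv (allpass s a) z = s * of_real (a\<^sup>2 - 1) / W\<^sup>2"
    unfolding allpass_def[abs_def] W_def using W[unfolded W_def]
    by (intro DERIV_imp_deriv) (auto intro!: derivative_eq_intros simp: power2_eq_square field_simps)
  also have "allpass s a z = s * z * cnj W / W"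
    using allpass_unit_circle(1)[OF assms(2)] by (simp add: W_def z_def)
  also have "z * (s * of_real (a\<^sup>2 - 1) / W\<^sup>2) / (s * z * cnj W / W) = of_real (a\<^sup>2 - 1) / (W * cnj W)"
    using W assms(1) by (simp add: z_def power2_eq_square)
  also have "W * cnj W = of_real ((cmod W)\<^sup>2)" by (rule complex_norm_square[symmetric])
  finally show ?thesis by (simp add: W_def z_def)
qed

text \<open>Real and imaginary parts of the interpolation condition
  \<open>cis \<theta> * (cis \<omega> + a) = sr * (a * cis \<omega> + 1)\<close>, with \<open>x, y, u, v\<close> standing for
  \<open>cos \<theta>, sin \<theta>, cos \<omega>, sin \<omega>\<close>; the condition is linear in \<open>a\<close>.\<close>
lemma allpass_parameter_identities:
  fixes x y u v sr :: real
  assumes "x\<^sup>2 + y\<^sup>2 = 1" "u\<^sup>2 + v\<^sup>2 = 1" "sr\<^sup>2 = 1"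
    and "1 - sr * (u * x + v * y) \<noteq> 0"
  defines "a \<equiv> (sr * x - u) / (1 - sr * (u * x + v * y))"
  shows "x * (u + a) - y * v = sr * (a * u + 1)" and "x * v + y * (u + a) = sr * a * v"
  using assms unfolding a_def by (simp_all add: field_simps) algebra+

lemma allpass_interpolation:
  assumes "0 < \<omega>" "\<omega> < pi" "sin \<theta> \<noteq> 0"
  obtains sr a :: real
  where "sr \<in> {1, -1}" "sr * sin \<theta> < 0" "\<bar>a\<bar> < 1" "allpass (of_real sr) a (cis \<omega>) = cis \<theta>"
proof -
  define x where "x = cos \<theta>"
  define y where "y = sin \<theta>"
  define u where "u = cos \<omega>"
  define v where "v = sin \<omega>"
  define sr :: real where "sr = (if y > 0 then -1 else 1)"
  have sr: "sr \<in> {1, -1}" "sr\<^sup>2 = 1" by (auto simp: sr_def)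
  have sry: "sr * y < 0" using assms(3) by (auto simp: sr_def y_def)
  have "v > 0" unfolding v_def using assms(1,2) by (rule sin_gt_zero)
  txt \<open>With \<open>sr\<close> of sign opposite to \<open>sin \<theta>\<close>, the denominator of \<open>a\<close> exceeds
    the modulus of its numerator.\<close>
  have "\<bar>sr * x\<bar> \<le> 1" "\<bar>u\<bar> \<le> 1" using sr by (auto simp: x_def u_def abs_mult)
  then have "(1 + u) * (1 - sr * x) \<ge> 0" "(1 - u) * (1 + sr * x) \<ge> 0"
    by (auto intro!: mult_nonneg_nonneg)
  moreover have "- (sr * y) * v > 0" using sry \<open>v > 0\<close> by (simp add: mult_neg_pos)
  ultimately have "1 - sr * (u * x + v * y) - (sr * x - u) > 0" "1 - sr * (u * x + v * y) + (sr * x - u) > 0"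
    by (simp_all add: algebra_simps)
  then have D: "1 - sr * (u * x + v * y) > 0"
    and a: "\<bar>(sr * x - u) / (1 - sr * (u * x + v * y))\<bar> < 1"
    by (auto simp: abs_less_iff divide_less_eq less_divide_eq)
  define a where "a = (sr * x - u) / (1 - sr * (u * x + v * y))"
  have "x\<^sup>2 + y\<^sup>2 = 1" "u\<^sup>2 + v\<^sup>2 = 1" by (simp_all add: x_def y_def u_def v_def)
  note identities = allpass_parameter_identities[OF this sr(2) less_imp_neq[OF D, symmetric], folded a_def]
  have "cis \<theta> * (cis \<omega> + of_real a) = of_real sr * (of_real a * cis \<omega> + 1)"
    using identities by (simp add: complex_eq_iff x_def y_def u_def v_def algebra_simps)
  moreover have "cis \<omega> + of_real a \<noteq> 0" using a by (intro allpass_denominator_nonzero) (simp_all add: a_def)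
  ultimately have "allpass (of_real sr) a (cis \<omega>) = cis \<theta>" by (simp add: allpass_def field_simps)
  with sr(1) sry a show thesis by (intro that) (simp_all add: y_def a_def)
qed

lemma phase_deriv_interpolating_allpass:
  assumes a: "\<bar>a\<bar> < 1" and sr: "sr\<^sup>2 = 1" and interp: "allpass (of_real sr) a (cis \<omega>) = cis \<theta>"
    and "sin \<omega> \<noteq> 0"
  shows "phase_deriv (allpass (of_real sr) a) \<omega> = sr * sin \<theta> / sin \<omega>"
proof -
  define z where "z = cis \<omega>"
  define W where "W = z + of_real a"
  have "W \<noteq> 0" using allpass_denominator_nonzero[OF a] by (simp add: W_def z_def)
  have "z * cnj z = 1" by (simp add: z_def cis_cnj cis_mult)
  have "cis \<theta> = of_real sr * z * cnj W / W"
    using interp allpass_unit_circle(1)[OF a, of z] by (simp add: W_def z_def)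
  then have tW: "cis \<theta> * W = of_real sr * z * cnj W" using \<open>W \<noteq> 0\<close> by (simp add: eq_divide_eq)
  have "cis \<theta> * of_real ((cmod W)\<^sup>2) = cis \<theta> * W * cnj W"
    by (simp only: complex_norm_square mult.assoc)
  also have "\<dots> = of_real sr * z * (cnj W)\<^sup>2"
    by (simp add: tW power2_eq_square mult.assoc)
  also have "\<dots> = of_real sr * (cnj z * (z * cnj z) + 2 * of_real a * (z * cnj z) + of_real (a\<^sup>2) * z)"
    by (simp add: W_def power2_eq_square algebra_simps)
  also have "\<dots> = of_real sr * (cnj z + 2 * of_real a + of_real (a\<^sup>2) * z)"
    by (simp only: \<open>z * cnj z = 1\<close> mult_1_right)
  finally have "sin \<theta> * (cmod W)\<^sup>2 = sr * (sin \<omega> * (a\<^sup>2 - 1))"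
    by (fastforce dest: arg_cong[of _ _ Im] simp: z_def algebra_simps)
  then have "sr * sin \<theta> * (cmod W)\<^sup>2 = sr\<^sup>2 * (sin \<omega> * (a\<^sup>2 - 1))"
    by (simp only: mult.assoc power2_eq_square)
  then have "sr * sin \<theta> * (cmod W)\<^sup>2 = sin \<omega> * (a\<^sup>2 - 1)"
    using sr by simp
  moreover have "(cmod W)\<^sup>2 > 0" using \<open>W \<noteq> 0\<close> by simp
  ultimately have "(a\<^sup>2 - 1) / (cmod W)\<^sup>2 = sr * sin \<theta> / sin \<omega>"
    using \<open>sin \<omega> \<noteq> 0\<close> by (simp add: field_simps)
  moreover have "complex_of_real sr \<noteq> 0" using sr by auto
  ultimately show ?thesis using phase_deriv_allpass[OF _ a] by (simp add: W_def z_def)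
qed

lemma RF_phase_deriv_le:
  assumes "f \<in> RF \<omega> \<theta>" "0 < \<omega>" "\<omega> < pi"
  shows "phase_deriv f \<omega> \<le> - \<bar>sin \<theta> / sin \<omega>\<bar>"
proof -
  have "sin \<omega> > 0" using assms(2,3) by (rule sin_gt_zero)
  then show ?thesis
    using RF_phase_deriv_bound(2)[OF assms(1)] by (simp add: abs_divide pos_le_divide_eq[symmetric])
qed

lemma RF_extremal_allpass:
  assumes "0 < \<omega>" "\<omega> < pi" "sin \<theta> \<noteq> 0"
  shows "\<exists>s\<in>{1, -1}. \<exists>a. \<bar>a\<bar> < 1 \<and> allpass s a \<in> RF \<omega> \<theta> \<and>
           phase_deriv (allpass s a) \<omega> = - \<bar>sin \<theta> / sin \<omega>\<bar>"
proof -
  obtain sr a :: real where sr: "sr \<in> {1, -1}" "sr * sin \<theta> < 0" and a: "\<bar>a\<bar> < 1"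
    and interp: "allpass (of_real sr) a (cis \<omega>) = cis \<theta>"
    using allpass_interpolation[OF assms] .
  have "sin \<omega> > 0" using assms(1,2) by (rule sin_gt_zero)
  have "allpass (of_real sr) a \<in> RF \<omega> \<theta>"
    using allpass_in_RH_inf[OF _ a] hinf_norm_allpass[OF a] interp sr(1) by (auto simp: RF_def)
  moreover have "phase_deriv (allpass (of_real sr) a) \<omega> = - \<bar>sin \<theta> / sin \<omega>\<bar>"
    using phase_deriv_interpolating_allpass[OF a _ interp] sr \<open>sin \<omega> > 0\<close>
    by (auto simp: abs_divide abs_if divide_less_0_iff)
  ultimately show ?thesis using sr(1) a by (intro bexI[of _ "of_real sr"]) auto
qed

lemma RF_extremal_const:
  assumes "sin \<theta> = 0"
  shows "\<exists>c\<in>{1, -1}. (\<lambda>z. c) \<in> RF \<omega> \<theta> \<and> phase_deriv (\<lambda>z. c) \<omega> = 0"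
proof -
  have "cos \<theta> = 1 \<or> cos \<theta> = -1" using sin_cos_squared_add[of \<theta>] assms by (simp add: power2_eq_1_iff)
  then have "cis \<theta> \<in> {1, -1}" using assms by (auto simp: complex_eq_iff)
  then show ?thesis using const_in_RF phase_deriv_const by fastforce
qed

theorem theorem3:
  fixes \<omega>p \<theta>p :: real
  assumes "0 \<le> \<omega>p" and "\<omega>p \<le> pi"
  shows
    "(0 < \<omega>p \<and> \<omega>p < pi \<longrightarrow>
        (SUP f\<in>RF \<omega>p \<theta>p. phase_deriv f \<omega>p) = - \<bar>sin \<theta>p / sin \<omega>p\<bar>)
   \<and> ((\<omega>p = 0 \<or> \<omega>p = pi) \<and> (\<exists>k::int. \<theta>p = of_int k * pi) \<longrightarrow>
        (SUP f\<in>RF \<omega>p \<theta>p. phase_deriv f \<omega>p) = 0)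
   \<and> ((0 < \<omega>p \<and> \<omega>p < pi) \<or> ((\<omega>p = 0 \<or> \<omega>p = pi) \<and> (\<exists>k::int. \<theta>p = of_int k * pi)) \<longrightarrow>
        ((\<exists>k::int. \<theta>p = of_int k * pi) \<longrightarrow>
           (\<exists>c\<in>{1, -1::complex}. (\<lambda>z. c) \<in> RF \<omega>p \<theta>p \<and>
              phase_deriv (\<lambda>z. c) \<omega>p = (SUP f\<in>RF \<omega>p \<theta>p. phase_deriv f \<omega>p)))
      \<and> (\<not> (\<exists>k::int. \<theta>p = of_int k * pi) \<longrightarrow>
           (\<exists>s\<in>{1, -1::complex}. \<exists>a::real. \<bar>a\<bar> < 1 \<and>
              (\<lambda>z. s * (of_real a * z + 1) / (z + of_real a)) \<in> RF \<omega>p \<theta>p \<and>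
              phase_deriv (\<lambda>z. s * (of_real a * z + 1) / (z + of_real a)) \<omega>p
                = (SUP f\<in>RF \<omega>p \<theta>p. phase_deriv f \<omega>p))))"
proof -
  let ?S = "SUP f\<in>RF \<omega>p \<theta>p. phase_deriv f \<omega>p"
  have sup_eq: "?S = B" if "f0 \<in> RF \<omega>p \<theta>p" "phase_deriv f0 \<omega>p = B"
    "\<And>f. f \<in> RF \<omega>p \<theta>p \<Longrightarrow> phase_deriv f \<omega>p \<le> B" for f0 B
    by (rule cSup_eq_maximum) (use that in auto)
  have sin_zero: "?S = 0 \<and> (\<exists>c\<in>{1, -1}. (\<lambda>z. c) \<in> RF \<omega>p \<theta>p \<and> phase_deriv (\<lambda>z. c) \<omega>p = ?S)"
    if "sin \<theta>p = 0"
    using RF_extremal_const[OF that] sup_eq RF_phase_deriv_bound(1) by metis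
  have interior: "?S = - \<bar>sin \<theta>p / sin \<omega>p\<bar> \<and> (\<exists>s\<in>{1, -1}. \<exists>a. \<bar>a\<bar> < 1 \<and>
      allpass s a \<in> RF \<omega>p \<theta>p \<and> phase_deriv (allpass s a) \<omega>p = ?S)"
    if "0 < \<omega>p" "\<omega>p < pi" "sin \<theta>p \<noteq> 0"
    using RF_extremal_allpass[OF that] sup_eq RF_phase_deriv_le[OF _ that(1,2)] by metis
  have allpass_eq: "(\<lambda>z. s * (of_real a * z + 1) / (z + of_real a)) = allpass s a" for s a
    by (simp add: fun_eq_iff allpass_def)
  show ?thesis
  proof (cases "sin \<theta>p = 0")
    case True
    then show ?thesis using sin_zero sin_zero_iff_int2[of \<theta>p] by auto
  next
    case False
    then have "\<not> (\<exists>k::int. \<theta>p = of_int k * pi)" by (auto simp: sin_zero_iff_int2)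
    with interior[OF _ _ False] show ?thesis unfolding allpass_eq by blast
  qed
qed

end
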